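(* For each $c>0$ let $\alpha_c,\beta_c,\gamma:\mathbb{R}^n\times\mathbb{S}^m\to\mathbb{R}$ satisfy conditions (a)–(e) below, and let $\mathcal{A}_c(x,\Lambda):=f(x)+\alpha_c(x,\Lambda)\,\varphi(G(x),\beta_c(x,\Lambda)\Lambda)+\gamma(x,\Lambda)$ with $\varphi(Y,Z)=\|P(Z/2-Y)\|_F^2-\|Z\|_F^2/4$. Conditions: (a) $\alpha_c,\beta_c,\gamma$ are continuously differentiable for all $c>0$; (b) $\alpha_c(x,\Lambda)>0$ for all $x$ feasible for (NSDP), all $\Lambda$, all $c>0$; and for every KKT pair $(\bar x,\bar\Lambda)$ of (NSDP): (c) $\alpha_c(\bar x,\bar\Lambda)\beta_c(\bar x,\bar\Lambda)=1$ for all $c>0$; (d) $\gamma(\bar x,\bar\Lambda)=0$, $\nabla_x\gamma(\bar x,\bar\Lambda)=0$, $\nabla_\Lambda\gamma(\bar x,\bar\Lambda)=0$; (e) there exist neighborhoods $V_{\bar x}$, $V_{\bar\Lambda}$ of $\bar x,\bar\Lambda$ and a continuous $\Gamma:V_{\bar x}\to V_{\bar\Lambda}$ with $\Gamma(\bar x)=\bar\Lambda$ and $\gamma(x,\Gamma(x))=0$ for all $x\in V_{\bar x}$. Assume also that $G_{\mathrm{NSDP}}\neq\emptyset$, $G_{\mathrm{NLP}}(c)\neq\emptyset$ for all $c>0$, and for every $x\in G_{\mathrm{NSDP}}$ there is at least one $\Lambda$ such that $(x,\Lambda)$ is a KKT pair of (NSDP). Finally assume there exists $\hat c>0$ such that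 for all $c\ge\hat c$, every stationary point of $\mathcal{A}_c$ (a point where $\nabla_x\mathcal{A}_c=0$ and $\nabla_\Lambda\mathcal{A}_c=0$) is a KKT pair of (NSDP). Then: (a) $G_{\mathrm{NLP}}(c)=\tilde G_{\mathrm{NSDP}}$ for all $c\ge\hat c$; (b) $L_{\mathrm{NLP}}(c)\subseteq\{(x,\Lambda): x\in L_{\mathrm{NSDP}}\text{ and }\Lambda\text{ is a corresponding Lagrange multiplier}\}$ for all $c\ge\hat c$.
   Context: $\mathbb{S}^m$ is the space of real symmetric $m\times m$ matrices with inner product $\langle Y,Z\rangle=\operatorname{tr}(YZ)$ and Frobenius norm; $\mathbb{S}^m_+$ is the PSD cone and $P$ the orthogonal projection onto it. $f:\mathbb{R}^n\to\mathbb{R}$, $G:\mathbb{R}^n\to\mathbb{S}^m$ are twice continuously differentiable; (NSDP) is: minimize $f(x)$ s.t. $G(x)\in\mathbb{S}^m_+$. $\nabla G(x)^*Z=(\langle\partial G(x)/\partial x_i,Z\rangle)_{i=1}^n$. With $Y\circ Z=(YZ+ZY)/2$, $(x,\Lambda)$ is a KKT pair of (NSDP) if $\nabla f(x)-\nabla G(x)^*\Lambda=0$, $\Lambda\circ G(x)=0$, $G(x)\in\mathbb{S}^m_+$, $\Lambda\in\mathbb{S}^m_+$; then $\Lambda$ is a Lagrange multiplier corresponding to $x$. $G_{\mathrm{NSDP}}$ and $L_{\mathrm{NSDP}}$ are the sets of global and local minimizers of (NSDP); $G_{\mathrm{NLP}}(c)$ and $L_{\mathrm{NLP}}(c)$ are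 the sets of global and local minimizers of $\mathcal{A}_c$ over $\mathbb{R}^n\times\mathbb{S}^m$; $\tilde G_{\mathrm{NSDP}}:=\{(x,\Lambda): x\in G_{\mathrm{NSDP}}\text{ and }\Lambda\text{ is a corresponding Lagrange multiplier}\}$. *)

theory Defs
  imports "HOL-Analysis.Analysis"
begin

text \<open>Symmetric matrices S^m, inner product tr(YZ), Frobenius norm (= library norm on real^'m^'m).\<close>

definition SymM :: "(real^'m^'m) set" where
  "SymM = {Y. transpose Y = Y}"

definition frob_inner :: "real^'m^'m \<Rightarrow> real^'m^'m \<Rightarrow> real" where
  "frob_inner Y Z = trace (Y ** Z)"

definition PSD :: "(real^'m^'m) set" where
  "PSD = {Y. Y \<in> SymM \<and> (\<forall>v. v \<bullet> (Y *v v) \<ge> 0)}"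

definition projPSD :: "real^'m^'m \<Rightarrow> real^'m^'m" where
  "projPSD Y = closest_point PSD Y"

definition jordan :: "real^'m^'m \<Rightarrow> real^'m^'m \<Rightarrow> real^'m^'m" where
  "jordan Y Z = (1/2) *\<^sub>R (Y ** Z + Z ** Y)"

definition phi :: "real^'m^'m \<Rightarrow> real^'m^'m \<Rightarrow> real" where
  "phi Y Z = (norm (projPSD ((1/2) *\<^sub>R Z - Y)))\<^sup>2 - (norm Z)\<^sup>2 / 4"

definition grad :: "(real^'n \<Rightarrow> real) \<Rightarrow> real^'n \<Rightarrow> real^'n" where
  "grad f x = (\<chi> i. frechet_derivative f (at x) (axis i 1))"

definition adjG :: "(real^'n \<Rightarrow> real^'m^'m) \<Rightarrow> real^'n \<Rightarrow> real^'m^'m \<Rightarrow> real^'n" where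
  "adjG G x Z = (\<chi> i. frob_inner (frechet_derivative G (at x) (axis i 1)) Z)"

definition C1_on :: "'a::real_normed_vector set \<Rightarrow> ('a \<Rightarrow> 'b::real_normed_vector) \<Rightarrow> bool" where
  "C1_on S g \<longleftrightarrow> (\<exists>D. (\<forall>p\<in>S. (g has_derivative blinfun_apply (D p)) (at p within S))
                      \<and> continuous_on S D)"

definition C2 :: "('a::real_normed_vector \<Rightarrow> 'b::real_normed_vector) \<Rightarrow> bool" where
  "C2 g \<longleftrightarrow> (\<exists>D D2. (\<forall>x. (g has_derivative blinfun_apply (D x)) (at x))
                  \<and> (\<forall>x. (D has_derivative blinfun_apply (D2 x)) (at x))
                  \<and> continuous_on UNIV D2)"

definition feasible :: "(real^'n \<Rightarrow> real^'m^'m) \<Rightarrow> real^'n \<Rightarrow> bool" where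
  "feasible G x \<longleftrightarrow> G x \<in> PSD"

definition KKT :: "(real^'n \<Rightarrow> real) \<Rightarrow> (real^'n \<Rightarrow> real^'m^'m) \<Rightarrow> real^'n \<Rightarrow> real^'m^'m \<Rightarrow> bool" where
  "KKT f G x L \<longleftrightarrow> grad f x - adjG G x L = 0 \<and> jordan L (G x) = 0 \<and> G x \<in> PSD \<and> L \<in> PSD"

definition G_NSDP :: "(real^'n \<Rightarrow> real) \<Rightarrow> (real^'n \<Rightarrow> real^'m^'m) \<Rightarrow> (real^'n) set" where
  "G_NSDP f G = {x. feasible G x \<and> (\<forall>y. feasible G y \<longrightarrow> f x \<le> f y)}"

definition L_NSDP :: "(real^'n \<Rightarrow> real) \<Rightarrow> (real^'n \<Rightarrow> real^'m^'m) \<Rightarrow> (real^'n) set" where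
  "L_NSDP f G = {x. feasible G x \<and> (\<exists>e>0. \<forall>y. feasible G y \<and> dist y x < e \<longrightarrow> f x \<le> f y)}"

definition Aug :: "(real^'n \<Rightarrow> real) \<Rightarrow> (real^'n \<Rightarrow> real^'m^'m)
    \<Rightarrow> (real \<Rightarrow> (real^'n) \<times> (real^'m^'m) \<Rightarrow> real) \<Rightarrow> (real \<Rightarrow> (real^'n) \<times> (real^'m^'m) \<Rightarrow> real)
    \<Rightarrow> ((real^'n) \<times> (real^'m^'m) \<Rightarrow> real) \<Rightarrow> real \<Rightarrow> real^'n \<Rightarrow> real^'m^'m \<Rightarrow> real" where
  "Aug f G \<alpha> \<beta> \<gamma> c x L = f x + \<alpha> c (x, L) * phi (G x) (\<beta> c (x, L) *\<^sub>R L) + \<gamma> (x, L)"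

definition G_NLP :: "(real^'n \<Rightarrow> real^'m^'m \<Rightarrow> real) \<Rightarrow> ((real^'n) \<times> (real^'m^'m)) set" where
  "G_NLP A = {(x, L). L \<in> SymM \<and> (\<forall>y M. M \<in> SymM \<longrightarrow> A x L \<le> A y M)}"

definition L_NLP :: "(real^'n \<Rightarrow> real^'m^'m \<Rightarrow> real) \<Rightarrow> ((real^'n) \<times> (real^'m^'m)) set" where
  "L_NLP A = {(x, L). L \<in> SymM \<and> (\<exists>e>0. \<forall>y M. M \<in> SymM \<and> dist (y, M) (x, L) < e \<longrightarrow> A x L \<le> A y M)}"

definition stationary :: "(real^'n \<Rightarrow> real^'m^'m \<Rightarrow> real) \<Rightarrow> real^'n \<Rightarrow> real^'m^'m \<Rightarrow> bool" where
  "stationary A x L \<longleftrightarrow> L \<in> SymM \<and> ((\<lambda>y. A y L) has_derivative (\<lambda>_. 0)) (at x)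
      \<and> ((\<lambda>M. A x M) has_derivative (\<lambda>_. 0)) (at L within SymM)"

end

theory Submission
  imports Defs
begin

text \<open>At a KKT pair the projection of \<open>Z/2 - Y\<close> onto the PSD cone is \<open>Z/2\<close> by complementarity,
  so \<open>\<phi> = 0\<close> and \<open>\<A>\<^sub>c = f\<close> there; at feasible points \<open>\<phi> \<le> 0\<close>, so \<open>\<A>\<^sub>c \<le> f + \<gamma>\<close>. Local minimizers
  of the (differentiable) function \<open>\<A>\<^sub>c\<close> are stationary, hence KKT pairs for \<open>c \<ge> \<hat>c\<close>. Comparing
  values with a KKT pair at a global solution of (NSDP) gives (a); comparing values along the
  multiplier curve \<open>\<Gamma>\<close> of condition (e), on which \<open>\<gamma>\<close> vanishes, gives (b).\<close>

section \<open>Projections onto closed convex cones\<close>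

context
  fixes K :: "'a::euclidean_space set"
  assumes convex_cone_K: "convex_cone K" and closed_K: "closed K"
begin

lemma closest_point_cone_in: "closest_point K W \<in> K"
  using closest_point_in_set closed_K convex_cone_nonempty convex_cone_K by blast

lemma closest_point_cone_dot: "Q \<in> K \<Longrightarrow> (W - closest_point K W) \<bullet> (Q - closest_point K W) \<le> 0"
  using closest_point_dot closed_K convex_cone_K by (auto simp: convex_cone_def)

lemma closest_point_cone_orthogonal: "(W - closest_point K W) \<bullet> closest_point K W = 0"
proof -
  let ?p = "closest_point K W"
  have "0 \<in> K" "2 *\<^sub>R ?p \<in> K"
    using convex_cone_K closest_point_cone_in by (simp_all add: convex_cone_iff)
  then have "(W - ?p) \<bullet> (0 - ?p) \<le> 0" "(W - ?p) \<bullet> (2 *\<^sub>R ?p - ?p) \<le> 0"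
    using closest_point_cone_dot by blast+
  then show ?thesis
    by (simp add: inner_diff_right algebra_simps)
qed

lemma closest_point_cone_polar: "Q \<in> K \<Longrightarrow> (W - closest_point K W) \<bullet> Q \<le> 0"
  using closest_point_cone_dot[of "closest_point K W + Q" W] convex_cone_K closest_point_cone_in
  by (simp add: convex_cone_add)

lemma sqnorm_closest_point_cone_remainder:
  "\<bar>(norm (closest_point K (W + H)))\<^sup>2 - (norm (closest_point K W))\<^sup>2 - 2 * (closest_point K W \<bullet> H)\<bar>
     \<le> (norm H)\<^sup>2"
proof -
  define p where "p = closest_point K W"
  define q where "q = closest_point K (W + H)"
  have "W \<bullet> p = p \<bullet> p"
    using closest_point_cone_orthogonal[of W] by (simp add: p_def inner_diff_left)
  moreover have "W \<bullet> q + H \<bullet> q = q \<bullet> q"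
    using closest_point_cone_orthogonal[of "W + H"] by (simp add: q_def inner_diff_left inner_add_left)
  moreover have "W \<bullet> q - p \<bullet> q \<le> 0"
    using closest_point_cone_polar[OF closest_point_cone_in, of W "W + H"]
    by (simp add: p_def q_def inner_diff_left)
  moreover have "W \<bullet> p + H \<bullet> p - q \<bullet> p \<le> 0"
    using closest_point_cone_polar[OF closest_point_cone_in, of "W + H" W]
    by (simp add: p_def q_def inner_diff_left inner_add_left)
  moreover have "0 \<le> (q - p) \<bullet> (q - p)" "0 \<le> (q - p - H) \<bullet> (q - p - H)"
    by simp_all
  ultimately show ?thesis
    unfolding p_def[symmetric] q_def[symmetric] power2_norm_eq_inner
    by (simp add: inner_diff_left inner_diff_right inner_commute abs_le_iff algebra_simps)
qed

lemma has_derivative_sqnorm_closest_point_cone: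
  "((\<lambda>W. (norm (closest_point K W))\<^sup>2) has_derivative (\<lambda>H. 2 * (closest_point K W \<bullet> H))) (at W)"
  unfolding has_derivative_at_alt
proof (intro conjI allI impI)
  show "bounded_linear (\<lambda>H. 2 * (closest_point K W \<bullet> H))"
    by (intro bounded_linear_intros)
  fix e :: real
  assume "e > 0"
  show "\<exists>d>0. \<forall>V. norm (V - W) < d \<longrightarrow> norm ((norm (closest_point K V))\<^sup>2
      - (norm (closest_point K W))\<^sup>2 - 2 * (closest_point K W \<bullet> (V - W))) \<le> e * norm (V - W)"
  proof (intro exI[of _ e] conjI allI impI \<open>e > 0\<close>)
    fix V
    assume "norm (V - W) < e"
    then have "(norm (V - W))\<^sup>2 \<le> e * norm (V - W)"
      by (simp add: power2_eq_square mult_right_mono)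
    with sqnorm_closest_point_cone_remainder[of W "V - W"]
    show "norm ((norm (closest_point K V))\<^sup>2 - (norm (closest_point K W))\<^sup>2
        - 2 * (closest_point K W \<bullet> (V - W))) \<le> e * norm (V - W)"
      by simp
  qed
qed

context
  assumes acute_K: "\<And>Y Q. Y \<in> K \<Longrightarrow> Q \<in> K \<Longrightarrow> 0 \<le> Y \<bullet> Q"
begin

lemma closest_point_cone_complementary:
  assumes Y: "Y \<in> K" and Z: "Z \<in> K" and orth: "Y \<bullet> Z = 0"
  shows "closest_point K (Z - Y) = Z"
proof (rule closest_point_unique[symmetric, OF _ closed_K Z ballI])
  show "convex K"
    using convex_cone_K by (simp add: convex_cone_def)
  fix Q
  assume "Q \<in> K"
  then have "Y \<bullet> Y \<le> (Z - Y - Q) \<bullet> (Z - Y - Q)"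
    using acute_K[OF Y \<open>Q \<in> K\<close>] orth inner_ge_zero[of "Z - Q"]
    by (simp add: inner_diff_left inner_diff_right inner_commute algebra_simps)
  then show "dist (Z - Y) Z \<le> dist (Z - Y) Q"
    by (simp add: dist_norm norm_le)
qed

lemma norm_closest_point_cone_le:
  assumes "Y \<in> K"
  shows "norm (closest_point K (Z - Y)) \<le> norm Z"
proof -
  let ?p = "closest_point K (Z - Y)"
  have "(norm ?p)\<^sup>2 = (Z - Y) \<bullet> ?p"
    using closest_point_cone_orthogonal[of "Z - Y"] by (simp add: inner_diff_left power2_norm_eq_inner)
  also have "\<dots> \<le> Z \<bullet> ?p"
    using acute_K[OF assms closest_point_cone_in] by (simp add: inner_diff_left)
  also have "\<dots> \<le> norm Z * norm ?p"
    by (rule norm_cauchy_schwarz)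
  finally show ?thesis
    by (cases "norm ?p = 0") (auto simp: power2_eq_square)
qed

end

end


section \<open>The cone of positive semidefinite matrices\<close>

lemma SymM_iff: "Y \<in> SymM \<longleftrightarrow> (\<forall>i j. Y $ i $ j = Y $ j $ i)"
  unfolding SymM_def transpose_def by (auto simp: vec_eq_iff)

lemma PSD_iff: "Y \<in> PSD \<longleftrightarrow> (\<forall>i j. Y $ i $ j = Y $ j $ i) \<and> (\<forall>v. 0 \<le> v \<bullet> (Y *v v))"
  unfolding PSD_def SymM_iff by simp

lemma subspace_SymM: "subspace SymM"
  unfolding subspace_def SymM_def transpose_def by (simp add: vec_eq_iff)

lemma PSD_subset_SymM: "PSD \<subseteq> SymM"
  unfolding PSD_def by auto

definition outer_product :: "real^'m \<Rightarrow> real^'m^'m" where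
  "outer_product c = (\<chi> i j. c $ i * c $ j)"

lemma inner_outer_product: "A \<bullet> outer_product c = c \<bullet> (A *v c)"
  by (simp add: outer_product_def inner_vec_def matrix_vector_mult_def sum_distrib_left mult_ac)

lemma quadratic_form_outer_product: "v \<bullet> (outer_product c *v v) = (c \<bullet> v)\<^sup>2"
  by (simp add: outer_product_def inner_vec_def matrix_vector_mult_def sum_distrib_left
      sum_distrib_right power2_eq_square mult_ac)

lemma quadratic_form_shift:
  fixes B :: "real^'m^'m"
  assumes "B \<in> SymM"
  shows "(v - s *\<^sub>R axis p 1) \<bullet> (B *v (v - s *\<^sub>R axis p 1))
     = v \<bullet> (B *v v) - 2 * s * (column p B \<bullet> v) + s\<^sup>2 * B $ p $ p"
proof -
  have "axis p 1 \<bullet> (B *v v) = (B *v v) $ p"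
    by (simp add: inner_axis')
  also have "\<dots> = column p B \<bullet> v"
    using assms by (simp add: inner_vec_def matrix_vector_mult_def column_def SymM_iff mult.commute)
  finally have e1: "axis p 1 \<bullet> (B *v v) = column p B \<bullet> v" .
  have e2: "v \<bullet> (B *v axis p 1) = column p B \<bullet> v"
    by (simp add: matrix_vector_mult_basis inner_commute)
  have e3: "axis p 1 \<bullet> (B *v axis p 1) = B $ p $ p"
    by (simp add: matrix_vector_mult_basis column_def inner_axis')
  show ?thesis
    by (simp add: matrix_vector_mult_diff_distrib matrix_vector_mult_scaleR inner_diff_left
        inner_diff_right e1 e2 e3 power2_eq_square algebra_simps)
qed

lemma PSD_diag_nonneg:
  assumes "B \<in> PSD"
  shows "0 \<le> B $ p $ p"
proof -
  have "0 \<le> axis p 1 \<bullet> (B *v axis p 1)"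
    using assms PSD_iff by blast
  then show ?thesis
    by (simp add: matrix_vector_mult_basis column_def inner_axis')
qed

lemma PSD_row_zero_if_diag_zero:
  fixes B :: "real^'m^'m"
  assumes B: "B \<in> PSD" and diag: "B $ p $ p = 0"
  shows "B $ p $ j = 0"
proof (rule ccontr)
  assume nz: "B $ p $ j \<noteq> 0"
  define t where "t = (B $ j $ j + 1) / (2 * B $ p $ j)"
  have "0 \<le> (axis j 1 - t *\<^sub>R axis p 1) \<bullet> (B *v (axis j 1 - t *\<^sub>R axis p 1))"
    using B PSD_iff by blast
  also have "\<dots> = B $ j $ j - 2 * t * B $ j $ p"
    using quadratic_form_shift[of B "axis j 1" t p] B diag PSD_subset_SymM
    by (auto simp: matrix_vector_mult_basis column_def inner_axis' inner_axis)
  also have "\<dots> = B $ j $ j - 2 * t * B $ p $ j"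
    using B PSD_iff by metis
  also have "\<dots> = -1"
    using nz by (simp add: t_def field_simps)
  finally show False by simp
qed

text \<open>The Schur complement step of an \<open>L D L\<^sup>T\<close> factorization; it clears the pivot's row.\<close>
lemma PSD_eliminate_pivot:
  fixes B :: "real^'m^'m"
  assumes B: "B \<in> PSD" and pivot: "0 < B $ p $ p"
  shows "B - (1 / B $ p $ p) *\<^sub>R outer_product (column p B) \<in> PSD"
proof -
  let ?c = "column p B"
  have sym: "B $ i $ j = B $ j $ i" for i j
    using B PSD_iff by blast
  have "0 \<le> v \<bullet> ((B - (1 / B $ p $ p) *\<^sub>R outer_product ?c) *v v)" for v
  proof -
    define s where "s = (?c \<bullet> v) / B $ p $ p"
    have "0 \<le> (v - s *\<^sub>R axis p 1) \<bullet> (B *v (v - s *\<^sub>R axis p 1))"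
      using B PSD_iff by blast
    also have "\<dots> = v \<bullet> (B *v v) - (?c \<bullet> v)\<^sup>2 / B $ p $ p"
      using quadratic_form_shift[of B v s p] B PSD_subset_SymM pivot
      by (auto simp: s_def power2_eq_square field_simps)
    also have "\<dots> = v \<bullet> ((B - (1 / B $ p $ p) *\<^sub>R outer_product ?c) *v v)"
      by (simp add: matrix_vector_mult_diff_rdistrib scaleR_matrix_vector_assoc[symmetric]
          inner_diff_right quadratic_form_outer_product)
    finally show ?thesis .
  qed
  then show ?thesis
    unfolding PSD_iff by (simp add: outer_product_def column_def sym mult.commute)
qed

text \<open>Self-duality (one half): eliminating the rows of \<open>B\<close> one at a time writes \<open>B\<close> as a
  nonnegative combination of outer products \<open>c c\<^sup>T\<close>, and \<open>\<langle>A, c c\<^sup>T\<rangle> = c\<^sup>T A c \<ge> 0\<close>.\<close>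
lemma PSD_inner_nonneg:
  fixes A B :: "real^'m^'m"
  assumes A: "A \<in> PSD" and B: "B \<in> PSD"
  shows "0 \<le> A \<bullet> B"
proof -
  have "0 \<le> A \<bullet> B" if "B \<in> PSD" "\<forall>i j. B $ i $ j \<noteq> 0 \<longrightarrow> i \<in> R" for R B
    using finite[of R] that
  proof (induction R arbitrary: B rule: finite_induct)
    case empty
    then have "B = 0" by (auto simp: vec_eq_iff)
    then show ?case by simp
  next
    case (insert p R)
    show ?case
    proof (cases "B $ p $ p = 0")
      case True
      then show ?thesis
        using insert PSD_row_zero_if_diag_zero by blast
    next
      case False
      then have pivot: "0 < B $ p $ p"
        using PSD_diag_nonneg[OF insert.prems(1)] by (simp add: order_less_le)
      define B' where "B' = B - (1 / B $ p $ p) *\<^sub>R outer_product (column p B)"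
      have sym: "B $ i $ j = B $ j $ i" for i j
        using insert.prems(1) PSD_iff by blast
      have "B' $ i $ j = 0" if "i \<notin> R" for i j
      proof (cases "i = p")
        case True
        then show ?thesis
          using pivot by (simp add: B'_def outer_product_def column_def sym)
      next
        case False
        then have "B $ i $ j = 0" "B $ i $ p = 0"
          using insert.prems(2) that by auto
        then show ?thesis
          by (simp add: B'_def outer_product_def column_def)
      qed
      then have "0 \<le> A \<bullet> B'"
        using insert.IH PSD_eliminate_pivot[OF insert.prems(1) pivot] by (metis B'_def)
      moreover have "0 \<le> column p B \<bullet> (A *v column p B)"
        using A PSD_iff by blast
      moreover have "A \<bullet> B = A \<bullet> B' + column p B \<bullet> (A *v column p B) / B $ p $ p"
        by (simp add: B'_def inner_diff_right inner_outer_product)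
      ultimately show ?thesis
        using pivot by simp
    qed
  qed
  then show ?thesis
    using B by blast
qed

lemma convex_cone_PSD: "convex_cone PSD"
  unfolding convex_cone_iff
  by (auto simp: PSD_iff matrix_vector_mult_add_rdistrib scaleR_matrix_vector_assoc[symmetric] inner_add_right)

lemma PSD_scaleR: "0 \<le> c \<Longrightarrow> Y \<in> PSD \<Longrightarrow> c *\<^sub>R Y \<in> PSD"
  by (rule convex_cone_scaleR[OF convex_cone_PSD])

lemma closed_PSD: "closed (PSD :: (real^'m^'m) set)"
proof -
  have "closed {Y::real^'m^'m. 0 \<le> v \<bullet> (Y *v v)}" for v
    unfolding inner_vec_def matrix_vector_mult_def by (intro closed_Collect_le continuous_intros)
  then have "closed (\<Inter>v. {Y::real^'m^'m. 0 \<le> v \<bullet> (Y *v v)})"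
    by (blast intro: closed_INT)
  then have "closed (SymM \<inter> (\<Inter>v. {Y::real^'m^'m. 0 \<le> v \<bullet> (Y *v v)}))"
    using closed_subspace subspace_SymM by (blast intro: closed_Int)
  moreover have "PSD = SymM \<inter> (\<Inter>v. {Y::real^'m^'m. 0 \<le> v \<bullet> (Y *v v)})"
    unfolding PSD_def by auto
  ultimately show ?thesis
    by simp
qed

text \<open>The library inner product on \<open>real^'m^'m\<close> is the Frobenius inner product \<open>tr (Y Z)\<close> of
  symmetric matrices, whereas \<open>jordan L Y = (L Y + Y L) / 2\<close> has trace \<open>tr (L Y)\<close>.\<close>
lemma jordan_zero_imp_inner_zero:
  fixes L Y :: "real^'m^'m"
  assumes "Y \<in> SymM" "jordan L Y = 0"
  shows "L \<bullet> Y = 0"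
proof -
  have "trace (L ** Y) = L \<bullet> Y"
    using assms(1) by (simp add: trace_def matrix_matrix_mult_def inner_vec_def SymM_iff)
  moreover have "trace (L ** Y + Y ** L) = 0"
    using arg_cong[OF assms(2), of trace] by (simp add: jordan_def trace_def sum_divide_distrib[symmetric])
  ultimately show ?thesis
    by (simp add: trace_add trace_mul_sym[of Y L])
qed


lemma phi_nonpos:
  assumes "Y \<in> PSD"
  shows "phi Y Z \<le> 0"
proof -
  have "norm (projPSD ((1/2) *\<^sub>R Z - Y)) \<le> norm ((1/2) *\<^sub>R Z)"
    unfolding projPSD_def
    using norm_closest_point_cone_le[OF convex_cone_PSD closed_PSD PSD_inner_nonneg assms] .
  then have "(norm (projPSD ((1/2) *\<^sub>R Z - Y)))\<^sup>2 \<le> (norm ((1/2) *\<^sub>R Z))\<^sup>2"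
    by (simp add: power_mono)
  then show ?thesis
    by (simp add: phi_def power_divide)
qed

lemma phi_complementary:
  assumes "Y \<in> PSD" "Z \<in> PSD" "Y \<bullet> Z = 0"
  shows "phi Y Z = 0"
proof -
  have "(1/2) *\<^sub>R Z \<in> PSD"
    using assms(2) by (simp add: PSD_scaleR)
  then have "projPSD ((1/2) *\<^sub>R Z - Y) = (1/2) *\<^sub>R Z"
    unfolding projPSD_def using assms
    by (intro closest_point_cone_complementary[OF convex_cone_PSD closed_PSD PSD_inner_nonneg]) simp_all
  then show ?thesis
    by (simp add: phi_def power_divide)
qed

lemma differentiable_sqnorm_projPSD: "(\<lambda>W. (norm (projPSD W))\<^sup>2) differentiable (at W)"
  unfolding differentiable_def projPSD_def
  using has_derivative_sqnorm_closest_point_cone[OF convex_cone_PSD closed_PSD] by blast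


section \<open>Local minima within a subspace\<close>

lemma has_derivative_zero_if_vanishes_on_directions:
  assumes "(g has_derivative D) (at p within S)" "\<And>y. y \<in> S \<Longrightarrow> D (y - p) = 0"
  shows "(g has_derivative (\<lambda>_. 0)) (at p within S)"
proof -
  have "\<forall>\<^sub>F y in at p within S. (1 / norm (y - p)) *\<^sub>R (g y - (g p + D (y - p)))
      = (1 / norm (y - p)) *\<^sub>R (g y - (g p + 0))"
    using assms(2) by (simp add: eventually_at_filter)
  with assms(1) show ?thesis
    unfolding has_derivative_within by (simp add: tendsto_cong)
qed

lemma has_derivative_zero_at_local_min_within_subspace:
  fixes g :: "'a::real_normed_vector \<Rightarrow> real"
  assumes S: "subspace S" and p: "p \<in> S" and D: "(g has_derivative D) (at p within S)"
    and e: "0 < e" and min: "\<And>y. y \<in> S \<Longrightarrow> dist y p < e \<Longrightarrow> g p \<le> g y"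
  shows "(g has_derivative (\<lambda>_. 0)) (at p within S)"
proof (rule has_derivative_zero_if_vanishes_on_directions[OF D])
  have "D h = 0" if h: "h \<in> S" for h
  proof -
    let ?line = "\<lambda>t::real. p + t *\<^sub>R h"
    have line_S: "range ?line \<subseteq> S"
      using S p h by (auto intro: subspace_add subspace_scale)
    have "(?line has_derivative (\<lambda>t. t *\<^sub>R h)) (at 0)"
      by (auto intro!: derivative_eq_intros)
    moreover have "(g has_derivative D) (at (?line 0) within range ?line)"
      using has_derivative_subset[OF D line_S] by simp
    ultimately have "((\<lambda>t. g (?line t)) has_derivative (\<lambda>t. D (t *\<^sub>R h))) (at 0)"
      by (rule has_derivative_in_compose)
    moreover have "(?line \<longlongrightarrow> p) (at 0)"
      by (auto intro!: tendsto_eq_intros)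
    then have "\<forall>\<^sub>F t in at 0. dist (?line t) p < e"
      using e by (rule tendstoD)
    then have "\<forall>\<^sub>F t in at 0. g (?line 0) \<le> g (?line t)"
      by (rule eventually_mono) (use line_S min in auto)
    ultimately have "(\<lambda>t. D (t *\<^sub>R h)) = (\<lambda>_. 0)"
      by (rule has_derivative_local_min)
    then show "D h = 0"
      by (metis scaleR_one)
  qed
  then show "D (y - p) = 0" if "y \<in> S" for y
    using S p that by (simp add: subspace_diff)
qed


lemma differentiable_Aug:
  fixes f :: "real^'n \<Rightarrow> real" and G :: "real^'n \<Rightarrow> real^'m^'m"
  assumes f: "C2 f" and G: "C2 G" and \<alpha>: "C1_on (UNIV \<times> SymM) (\<alpha> c)"
    and \<beta>: "C1_on (UNIV \<times> SymM) (\<beta> c)" and \<gamma>: "C1_on (UNIV \<times> SymM) \<gamma>"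
    and z: "z \<in> UNIV \<times> SymM"
  shows "(\<lambda>z. Aug f G \<alpha> \<beta> \<gamma> c (fst z) (snd z)) differentiable (at z within UNIV \<times> SymM)"
proof -
  let ?T = "UNIV \<times> SymM :: ((real^'n) \<times> (real^'m^'m)) set"
  have C1: "h differentiable (at z within ?T)" if "C1_on ?T h" for h :: "_ \<Rightarrow> real"
    using that z unfolding C1_on_def differentiable_def by blast
  have C2: "(\<lambda>z. h (fst z)) differentiable (at z within ?T)" if "C2 h" for h :: "real^'n \<Rightarrow> 'v::real_normed_vector"
    using that unfolding C2_def
    by (metis differentiableI differentiable_compose bounded_linear_fst bounded_linear_imp_differentiable)
  define Z where "Z z = \<beta> c z *\<^sub>R snd z" for z
  have Z': "Z differentiable (at z within ?T)"
    unfolding Z_def using C1[OF \<beta>] bounded_linear_imp_differentiable[OF bounded_linear_snd]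
    by (rule differentiable_scaleR)
  then have "(\<lambda>z. (1/2) *\<^sub>R Z z - G (fst z)) differentiable (at z within ?T)"
    using C2[OF G] by (intro differentiable_diff differentiable_scaleR differentiable_const)
  then have "(\<lambda>z. (norm (projPSD ((1/2) *\<^sub>R Z z - G (fst z))))\<^sup>2) differentiable (at z within ?T)"
    by (rule differentiable_compose[OF differentiable_sqnorm_projPSD])
  moreover have "(\<lambda>z. (norm (Z z))\<^sup>2) differentiable (at z within ?T)"
    using Z' by (rule differentiable_compose[OF differentiable_sqnorm_at])
  ultimately have "(\<lambda>z. phi (G (fst z)) (Z z)) differentiable (at z within ?T)"
    unfolding phi_def by (intro differentiable_diff differentiable_divide differentiable_const) simp_all
  then show ?thesis
    unfolding Aug_def Z_def prod.collapse using C2[OF f] C1[OF \<alpha>] C1[OF \<gamma>]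
    by (intro differentiable_add differentiable_mult)
qed

lemma L_NLP_imp_stationary:
  fixes f :: "real^'n \<Rightarrow> real" and G :: "real^'n \<Rightarrow> real^'m^'m"
  assumes f: "C2 f" and G: "C2 G" and \<alpha>: "C1_on (UNIV \<times> SymM) (\<alpha> c)"
    and \<beta>: "C1_on (UNIV \<times> SymM) (\<beta> c)" and \<gamma>: "C1_on (UNIV \<times> SymM) \<gamma>"
    and loc: "(x, L) \<in> L_NLP (Aug f G \<alpha> \<beta> \<gamma> c)"
  shows "stationary (Aug f G \<alpha> \<beta> \<gamma> c) x L"
proof -
  let ?A = "Aug f G \<alpha> \<beta> \<gamma> c"
  let ?F = "\<lambda>z. ?A (fst z) (snd z)"
  let ?T = "UNIV \<times> SymM :: ((real^'n) \<times> (real^'m^'m)) set"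
  obtain e where L: "L \<in> SymM" and e: "0 < e"
    and min: "\<And>y M. M \<in> SymM \<Longrightarrow> dist (y, M) (x, L) < e \<Longrightarrow> ?A x L \<le> ?A y M"
    using loc unfolding L_NLP_def by blast
  obtain D where "(?F has_derivative D) (at (x, L) within ?T)"
    using differentiable_Aug[where \<alpha> = \<alpha> and \<beta> = \<beta> and c = c, OF f G \<alpha> \<beta> \<gamma>, of "(x, L)"] L
    unfolding differentiable_def by auto
  then have F': "(?F has_derivative (\<lambda>_. 0)) (at (x, L) within ?T)"
    using has_derivative_zero_at_local_min_within_subspace[where S = ?T] e min L
    by (fastforce simp: subspace_Times subspace_SymM)
  have "((\<lambda>y. (y, L)) has_derivative (\<lambda>y. (y, 0))) (at x)"
    by (auto intro!: derivative_eq_intros)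
  moreover have "(?F has_derivative (\<lambda>_. 0)) (at ((\<lambda>y. (y, L)) x) within range (\<lambda>y. (y, L)))"
    by (rule has_derivative_subset[OF F']) (use L in auto)
  ultimately have partial_x: "((\<lambda>y. ?F (y, L)) has_derivative (\<lambda>_. 0)) (at x)"
    by (rule has_derivative_in_compose)
  have "((\<lambda>M. (x, M)) has_derivative (\<lambda>M. (0, M))) (at L within SymM)"
    by (auto intro!: derivative_eq_intros)
  moreover have "(?F has_derivative (\<lambda>_. 0)) (at ((\<lambda>M. (x, M)) L) within (\<lambda>M. (x, M)) ` SymM)"
    by (rule has_derivative_subset[OF F']) auto
  ultimately have "((\<lambda>M. ?F (x, M)) has_derivative (\<lambda>_. 0)) (at L within SymM)"
    by (rule has_derivative_in_compose)
  then show ?thesis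
    unfolding stationary_def using L partial_x by simp
qed

lemma KKT_feasible: "KKT f G x L \<Longrightarrow> feasible G x"
  unfolding KKT_def feasible_def by blast

lemma KKT_multiplier_SymM: "KKT f G x L \<Longrightarrow> L \<in> SymM"
  unfolding KKT_def using PSD_subset_SymM by blast

lemma Aug_KKT_eq:
  assumes KKT: "KKT f G x L" and \<alpha>_pos: "0 < \<alpha> c (x, L)" and \<alpha>\<beta>: "\<alpha> c (x, L) * \<beta> c (x, L) = 1"
    and \<gamma>: "\<gamma> (x, L) = 0"
  shows "Aug f G \<alpha> \<beta> \<gamma> c x L = f x"
proof -
  have GP: "G x \<in> PSD" and LP: "L \<in> PSD" and "jordan L (G x) = 0"
    using KKT unfolding KKT_def by auto
  then have "L \<bullet> G x = 0"
    using PSD_subset_SymM jordan_zero_imp_inner_zero by blast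
  then have "G x \<bullet> (\<beta> c (x, L) *\<^sub>R L) = 0"
    by (simp add: inner_commute)
  moreover have "0 < \<beta> c (x, L)"
    using \<alpha>_pos \<alpha>\<beta> by (metis zero_less_mult_pos zero_less_one)
  then have "\<beta> c (x, L) *\<^sub>R L \<in> PSD"
    using LP by (simp add: PSD_scaleR)
  ultimately have "phi (G x) (\<beta> c (x, L) *\<^sub>R L) = 0"
    using GP phi_complementary by blast
  then show ?thesis
    using \<gamma> by (simp add: Aug_def)
qed

lemma Aug_feasible_le:
  assumes "feasible G y" "0 < \<alpha> c (y, M)"
  shows "Aug f G \<alpha> \<beta> \<gamma> c y M \<le> f y + \<gamma> (y, M)"
  using assms phi_nonpos[of "G y"] by (simp add: Aug_def feasible_def mult_nonneg_nonpos)


section \<open>Exactness of the penalty\<close>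

lemma G_NLP_eq_KKT_global_minimizers:
  fixes A :: "real^'n \<Rightarrow> real^'m^'m \<Rightarrow> real"
  assumes value_KKT: "\<And>x L. KKT f G x L \<Longrightarrow> A x L = f x"
    and L_NLP_KKT: "\<And>x L. (x, L) \<in> L_NLP A \<Longrightarrow> KKT f G x L"
    and "G_NSDP f G \<noteq> {}" and "\<forall>x\<in>G_NSDP f G. \<exists>L. KKT f G x L" and "G_NLP A \<noteq> {}"
  shows "G_NLP A = {(x, L). x \<in> G_NSDP f G \<and> KKT f G x L}"
proof -
  have G_NLP_KKT: "KKT f G x L" if "(x, L) \<in> G_NLP A" for x L
    using that L_NLP_KKT zero_less_one unfolding G_NLP_def L_NLP_def by blast
  obtain x0 L0 where x0: "x0 \<in> G_NSDP f G" and KKT0: "KKT f G x0 L0"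
    using assms(3,4) by blast
  obtain x1 L1 where x1: "(x1, L1) \<in> G_NLP A"
    using assms(5) by auto
  have "x \<in> G_NSDP f G" if "(x, L) \<in> G_NLP A" for x L
  proof -
    have "f x = A x L"
      using value_KKT G_NLP_KKT that by simp
    also have "\<dots> \<le> A x0 L0"
      using that KKT_multiplier_SymM[OF KKT0] unfolding G_NLP_def by blast
    also have "\<dots> = f x0"
      using value_KKT[OF KKT0] .
    finally show ?thesis
      using x0 KKT_feasible G_NLP_KKT that unfolding G_NSDP_def by fastforce
  qed
  moreover have "(x, L) \<in> G_NLP A" if "x \<in> G_NSDP f G" "KKT f G x L" for x L
  proof -
    have "A x L \<le> A y M" if "M \<in> SymM" for y M
    proof -
      have "A x L = f x"
        using value_KKT \<open>KKT f G x L\<close> by simp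
      also have "\<dots> \<le> f x1"
        using \<open>x \<in> G_NSDP f G\<close> KKT_feasible G_NLP_KKT[OF x1] unfolding G_NSDP_def by blast
      also have "\<dots> = A x1 L1"
        using value_KKT G_NLP_KKT[OF x1] by simp
      also have "\<dots> \<le> A y M"
        using x1 that unfolding G_NLP_def by blast
      finally show ?thesis .
    qed
    then show ?thesis
      using KKT_multiplier_SymM \<open>KKT f G x L\<close> unfolding G_NLP_def by blast
  qed
  ultimately show ?thesis
    using G_NLP_KKT by auto
qed

lemma L_NLP_subset_KKT_local_minimizers:
  fixes A :: "real^'n \<Rightarrow> real^'m^'m \<Rightarrow> real"
  assumes value_KKT: "\<And>x L. KKT f G x L \<Longrightarrow> A x L = f x"
    and L_NLP_KKT: "\<And>x L. (x, L) \<in> L_NLP A \<Longrightarrow> KKT f G x L"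
    and below: "\<And>y M. feasible G y \<Longrightarrow> M \<in> SymM \<Longrightarrow> A y M \<le> f y + \<gamma> (y, M)"
    and curve: "\<And>x L. KKT f G x L \<Longrightarrow> \<exists>V \<Gamma>. open V \<and> x \<in> V \<and> continuous_on V \<Gamma> \<and> \<Gamma> ` V \<subseteq> SymM
        \<and> \<Gamma> x = L \<and> (\<forall>y\<in>V. \<gamma> (y, \<Gamma> y) = 0)"
  shows "L_NLP A \<subseteq> {(x, L). x \<in> L_NSDP f G \<and> KKT f G x L}"
proof clarify
  fix x L
  assume loc: "(x, L) \<in> L_NLP A"
  then have KKT: "KKT f G x L"
    by (rule L_NLP_KKT)
  obtain e where e: "0 < e" and min: "\<And>y M. M \<in> SymM \<Longrightarrow> dist (y, M) (x, L) < e \<Longrightarrow> A x L \<le> A y M"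
    using loc unfolding L_NLP_def by blast
  obtain V \<Gamma> where V: "open V" "x \<in> V" and \<Gamma>: "continuous_on V \<Gamma>" "\<Gamma> ` V \<subseteq> SymM" "\<Gamma> x = L"
    and on_zero_set: "\<And>y. y \<in> V \<Longrightarrow> \<gamma> (y, \<Gamma> y) = 0"
    using curve[OF KKT] by blast
  have "isCont \<Gamma> x"
    using \<Gamma>(1) V continuous_on_eq_continuous_at by blast
  then have "((\<lambda>y. (y, \<Gamma> y)) \<longlongrightarrow> (x, L)) (at x)"
    using \<Gamma>(3) by (auto intro!: tendsto_intros simp: isCont_def)
  then have "\<forall>\<^sub>F y in at x. dist (y, \<Gamma> y) (x, L) < e"
    using e by (rule tendstoD)
  moreover have "\<forall>\<^sub>F y in at x. y \<in> V"
    using V by (rule eventually_at_in_open')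
  ultimately have "\<forall>\<^sub>F y in at x. feasible G y \<longrightarrow> f x \<le> f y"
  proof eventually_elim
    case (elim y)
    show ?case
      using min[of "\<Gamma> y" y] below[of y "\<Gamma> y"] on_zero_set[of y] \<Gamma>(2) elim value_KKT[OF KKT]
      by fastforce
  qed
  then obtain d where d: "0 < d"
    and near: "\<And>y. y \<noteq> x \<Longrightarrow> dist y x < d \<Longrightarrow> feasible G y \<Longrightarrow> f x \<le> f y"
    unfolding eventually_at by auto
  have "f x \<le> f y" if "feasible G y" "dist y x < d" for y
    using near[of y] that by (cases "y = x") auto
  then have "x \<in> L_NSDP f G"
    using d KKT_feasible[OF KKT] unfolding L_NSDP_def by blast
  with KKT show "x \<in> L_NSDP f G \<and> KKT f G x L" by blast
qed


theorem theorem3p8: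
  fixes f :: "real^'n \<Rightarrow> real" and G :: "real^'n \<Rightarrow> real^'m^'m"
    and \<alpha> \<beta> :: "real \<Rightarrow> (real^'n) \<times> (real^'m^'m) \<Rightarrow> real"
    and \<gamma> :: "(real^'n) \<times> (real^'m^'m) \<Rightarrow> real"
    and chat :: real
  assumes f_C2: "C2 f" and G_C2: "C2 G" and G_sym: "\<forall>x. G x \<in> SymM"
    and cond_a: "\<forall>c>0. C1_on (UNIV \<times> SymM) (\<alpha> c) \<and> C1_on (UNIV \<times> SymM) (\<beta> c)"
    and cond_a_gamma: "C1_on (UNIV \<times> SymM) \<gamma>"
    and cond_b: "\<forall>c>0. \<forall>x L. feasible G x \<and> L \<in> SymM \<longrightarrow> \<alpha> c (x, L) > 0"
    and cond_c: "\<forall>xb Lb. KKT f G xb Lb \<longrightarrow> (\<forall>c>0. \<alpha> c (xb, Lb) * \<beta> c (xb, Lb) = 1)"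
    and cond_d: "\<forall>xb Lb. KKT f G xb Lb \<longrightarrow>
        \<gamma> (xb, Lb) = 0
        \<and> ((\<lambda>x. \<gamma> (x, Lb)) has_derivative (\<lambda>_. 0)) (at xb)
        \<and> ((\<lambda>L. \<gamma> (xb, L)) has_derivative (\<lambda>_. 0)) (at Lb within SymM)"
    and cond_e: "\<forall>xb Lb. KKT f G xb Lb \<longrightarrow>
        (\<exists>Vx VL \<Gamma>. open Vx \<and> xb \<in> Vx \<and> VL \<subseteq> SymM \<and> openin (top_of_set SymM) VL \<and> Lb \<in> VL
           \<and> continuous_on Vx \<Gamma> \<and> \<Gamma> ` Vx \<subseteq> VL \<and> \<Gamma> xb = Lb
           \<and> (\<forall>x\<in>Vx. \<gamma> (x, \<Gamma> x) = 0))"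
    and GNSDP_ne: "G_NSDP f G \<noteq> {}"
    and GNLP_ne: "\<forall>c>0. G_NLP (Aug f G \<alpha> \<beta> \<gamma> c) \<noteq> {}"
    and mult_exists: "\<forall>x\<in>G_NSDP f G. \<exists>L. KKT f G x L"
    and chat_pos: "chat > 0"
    and stat_KKT: "\<forall>c\<ge>chat. \<forall>x L. stationary (Aug f G \<alpha> \<beta> \<gamma> c) x L \<longrightarrow> KKT f G x L"
  shows "\<forall>c\<ge>chat.
           G_NLP (Aug f G \<alpha> \<beta> \<gamma> c) = {(x, L). x \<in> G_NSDP f G \<and> KKT f G x L}
         \<and> L_NLP (Aug f G \<alpha> \<beta> \<gamma> c) \<subseteq> {(x, L). x \<in> L_NSDP f G \<and> KKT f G x L}"
proof (intro allI impI conjI)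
  fix c :: real
  assume "chat \<le> c"
  then have c: "0 < c" using chat_pos by linarith
  let ?A = "Aug f G \<alpha> \<beta> \<gamma> c"
  have value_KKT: "?A x L = f x" if "KKT f G x L" for x L
    by (rule Aug_KKT_eq[OF that])
      (use that cond_b cond_c cond_d c KKT_feasible[OF that] KKT_multiplier_SymM[OF that] in auto)
  have L_NLP_KKT: "KKT f G x L" if "(x, L) \<in> L_NLP ?A" for x L
    using L_NLP_imp_stationary[OF f_C2 G_C2 _ _ cond_a_gamma that] cond_a c stat_KKT \<open>chat \<le> c\<close> by blast
  have below: "?A y M \<le> f y + \<gamma> (y, M)" if "feasible G y" "M \<in> SymM" for y M
    using Aug_feasible_le[OF that(1)] cond_b c that by blast
  have curve: "\<exists>V \<Gamma>. open V \<and> x \<in> V \<and> continuous_on V \<Gamma> \<and> \<Gamma> ` V \<subseteq> SymM \<and> \<Gamma> x = L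
      \<and> (\<forall>y\<in>V. \<gamma> (y, \<Gamma> y) = 0)" if "KKT f G x L" for x L
    using cond_e[rule_format, OF that] by blast
  have "G_NLP ?A \<noteq> {}"
    using GNLP_ne c by blast
  then show "G_NLP ?A = {(x, L). x \<in> G_NSDP f G \<and> KKT f G x L}"
    using GNSDP_ne mult_exists value_KKT L_NLP_KKT by (simp add: G_NLP_eq_KKT_global_minimizers)
  show "L_NLP ?A \<subseteq> {(x, L). x \<in> L_NSDP f G \<and> KKT f G x L}"
    using value_KKT L_NLP_KKT below curve by (simp add: L_NLP_subset_KKT_local_minimizers[where \<gamma> = \<gamma>])
qed

end
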